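(* Let $\nu\in(0,1)$, $h>0$, $T>0$ and $q>\frac{1}{\nu}$, and let $n$ be the integer with $nh\le T<(n+1)h$. Let $L(\cdot),\vartheta(\cdot),\xi(\cdot)$ be nonnegative functions with $\vartheta(t)=0$ and $L(t)=0$ for $t<0$, where $L(\cdot)\in L^{q}(0,T)$ and $\vartheta(\cdot),\xi(\cdot)\in L^{\frac{q}{q-1}}[-h,T)$. Assume \[ \xi(t)\leq \vartheta(t)+\int_{0}^{t}\frac{L(s)\xi(s)}{(t-s)^{1-\nu}}ds+\int_{0}^{t}\frac{L(s)\xi(s-h)}{(t-s)^{1-\nu}}ds \quad \text{for a.e. } t\in[0,T], \] and $\xi(t)=0$ for $t<0$. Then there is a constant $K>0$ such that \[ \xi(t)\leq\vartheta_{n}(t)+K\int_{0}^{t}\frac{L(s)\vartheta(s)}{(t-s)^{1-\nu}}ds \quad\text{for a.e. } t\in [0,T], \] where \[ \vartheta_{n}(t)=\vartheta(t)+K\sum_{k=1}^{n}\int_{0}^{t-kh}\frac{L(s)\vartheta(s)}{(t-kh-s)^{1-\nu}}ds+K\sum_{k=0}^{n-1}\int_{h}^{t-kh}\frac{L(s)\vartheta(s-h)}{(t-kh-s)^{1-\nu}}ds . \]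
   Context: Integrals $\int_a^b$ with $b<a$ are understood to be zero (equivalently, the integrands vanish there since $\vartheta$ and $L$ vanish on negative arguments). *)

theory Defs
  imports "HOL-Analysis.Analysis"
begin

text \<open>Weakly singular integral  int_a^b f(s) / (c - s)^(1-nu) ds  of a nonnegative integrand,
  taken as a nonnegative (extended-real) Lebesgue integral; it is 0 when b < a.\<close>
definition sing_int :: "real \<Rightarrow> real \<Rightarrow> real \<Rightarrow> real \<Rightarrow> (real \<Rightarrow> real) \<Rightarrow> ennreal" where
  "sing_int \<nu> a b c f = (\<integral>\<^sup>+ s\<in>{a..b}. ennreal (f s / (c - s) powr (1 - \<nu>)) \<partial>lborel)"

definition theta_n :: "real \<Rightarrow> real \<Rightarrow> nat \<Rightarrow> real \<Rightarrow> (real \<Rightarrow> real) \<Rightarrow> (real \<Rightarrow> real) \<Rightarrow> real \<Rightarrow> ennreal" where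
  "theta_n \<nu> h n K L \<theta> t =
     ennreal (\<theta> t)
     + ennreal K * (\<Sum>k\<in>{1..n}. sing_int \<nu> 0 (t - real k * h) (t - real k * h) (\<lambda>s. L s * \<theta> s))
     + ennreal K * (\<Sum>k\<in>{0..<n}. sing_int \<nu> h (t - real k * h) (t - real k * h) (\<lambda>s. L s * \<theta> (s - h)))"

end

theory Submission
  imports Defs
begin

(* Write k(x) = x^(nu-1) for x > 0 and B_mu f(t) = int L(s) k(t-s) e^(mu(t-s)) f(s) ds.
   Since q > 1/nu, the conjugate exponent p = q/(q-1) makes k^p integrable near 0, so by Hoelder's
   inequality (L in L^q) there is a lambda such that B_0 maps the weighted kernel k(. - c) e^(lambda(. - c))
   into a quarter of itself on [0,T], and such that the adjoint kernel integral
   int L(t) k(t-s) e^(-lambda(t-s)) dt is at most 1/4.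
   The first estimate makes G = theta + 2 sum_(j<=n) (B_lambda theta (. - jh) + B_lambda theta(. - h) (. - jh))
   a supersolution of the delayed inequality on [0,T]: the delay turns the term with index j into the
   one with index j+1, and the terms with j > n vanish on [0,T] because T < (n+1)h.
   The second estimate shows, on the successive intervals (-oo, jh), that the excess (xi - G)^+,
   which satisfies the homogeneous delayed inequality, has vanishing weighted L^1 norm
   int L(t) e^(-lambda t) (xi - G)^+(t) dt (this norm is finite because xi is in L^p).
   Finally e^(lambda(t-s)) <= e^(lambda T) turns G into the bound with K = 2 e^(lambda T). *)

lemma Youngs_inequality_normalized:
  fixes x y A B p q :: real
  assumes pq: "p > 1" "q > 1" "1/p + 1/q = 1" and "x \<ge> 0" "y \<ge> 0" "A > 0" "B > 0"
  shows "x * y \<le> A powr (1/p) * B powr (1/q) * (x powr p / (p*A) + y powr q / (q*B))"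
proof -
  define a where "a = A powr (1/p)"
  define b where "b = B powr (1/q)"
  have "a > 0" "b > 0" using assms by (auto simp: a_def b_def)
  have "a powr p = A" "b powr q = B" using assms by (simp_all add: a_def b_def powr_powr)
  have "(x / a) * (y / b) \<le> (x / a) powr p / p + (y / b) powr q / q"
    using Youngs_inequality[OF pq, of "x / a" "y / b"] assms \<open>a > 0\<close> \<open>b > 0\<close> by auto
  also have "\<dots> = x powr p / (p*A) + y powr q / (q*B)"
    using assms \<open>a > 0\<close> \<open>b > 0\<close> \<open>a powr p = A\<close> \<open>b powr q = B\<close>
    by (simp add: powr_divide mult.commute)
  finally show ?thesis
    using \<open>a > 0\<close> \<open>b > 0\<close> by (simp add: a_def[symmetric] b_def[symmetric] field_simps)
qed

lemma nn_integral_mult_eq_0_if_powr: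
  fixes f g :: "'a \<Rightarrow> real"
  assumes "p > 0" "\<And>x. f x \<ge> 0" "(\<integral>\<^sup>+x. ennreal (f x powr p) \<partial>M) = 0"
    and [measurable]: "f \<in> borel_measurable M"
  shows "(\<integral>\<^sup>+x. ennreal (f x * g x) \<partial>M) = 0"
proof -
  have "AE x in M. ennreal (f x powr p) = 0"
    using assms by (subst nn_integral_0_iff_AE[symmetric]) auto
  then have "AE x in M. ennreal (f x * g x) = 0"
    by eventually_elim (use assms in auto)
  then show ?thesis by (subst nn_integral_cong_AE[where v = "\<lambda>_. 0"]) auto
qed

lemma nn_integral_Hoelder:
  fixes f g :: "'a \<Rightarrow> real" and p q A B :: real
  assumes pq: "p > 1" "q > 1" "1/p + 1/q = 1"
    and [measurable]: "f \<in> borel_measurable M" "g \<in> borel_measurable M"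
    and nonneg: "\<And>x. f x \<ge> 0" "\<And>x. g x \<ge> 0"
    and A: "(\<integral>\<^sup>+x. ennreal (f x powr p) \<partial>M) \<le> ennreal A" "A \<ge> 0"
    and B: "(\<integral>\<^sup>+x. ennreal (g x powr q) \<partial>M) \<le> ennreal B" "B \<ge> 0"
  shows "(\<integral>\<^sup>+x. ennreal (f x * g x) \<partial>M) \<le> ennreal (A powr (1/p) * B powr (1/q))"
proof (cases "A = 0 \<or> B = 0")
  case True
  then have "(\<integral>\<^sup>+x. ennreal (f x * g x) \<partial>M) = 0"
  proof
    assume "A = 0"
    with A pq nonneg show ?thesis by (intro nn_integral_mult_eq_0_if_powr[where p = p]) auto
  next
    assume "B = 0"
    with B pq nonneg show ?thesis
      by (subst mult.commute, intro nn_integral_mult_eq_0_if_powr[where p = q]) auto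
  qed
  then show ?thesis by simp
next
  case False
  then have A_pos: "A > 0" and B_pos: "B > 0" using A B by auto
  define C where "C = A powr (1/p) * B powr (1/q)"
  have C_pos: "C > 0" using A_pos B_pos by (simp add: C_def)
  have "(\<integral>\<^sup>+x. ennreal (f x * g x) \<partial>M) \<le>
      (\<integral>\<^sup>+x. ennreal (C/(p*A)) * ennreal (f x powr p) + ennreal (C/(q*B)) * ennreal (g x powr q) \<partial>M)"
    using Youngs_inequality_normalized[OF pq _ _ A_pos B_pos] nonneg C_pos A_pos B_pos pq
    by (intro nn_integral_mono)
       (simp add: C_def distrib_left ennreal_plus[symmetric] ennreal_mult[symmetric] del: ennreal_plus)
  also have "\<dots> = ennreal (C/(p*A)) * (\<integral>\<^sup>+x. ennreal (f x powr p) \<partial>M)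
      + ennreal (C/(q*B)) * (\<integral>\<^sup>+x. ennreal (g x powr q) \<partial>M)"
    by (simp add: nn_integral_add nn_integral_cmult)
  also have "\<dots> \<le> ennreal (C/(p*A)) * ennreal A + ennreal (C/(q*B)) * ennreal B"
    using A B by (intro add_mono mult_left_mono) auto
  also have "\<dots> = ennreal (C/(p*A) * A + C/(q*B) * B)"
    using C_pos A_pos B_pos pq
    by (simp add: ennreal_plus[symmetric] ennreal_mult[symmetric] del: ennreal_plus)
  also have "C/(p*A) * A + C/(q*B) * B = C"
    using A_pos B_pos pq by (simp add: field_simps)
  finally show ?thesis by (simp add: C_def)
qed

lemma exp_minus_le_powr_minus:
  fixes y b :: real
  assumes "y > 0" "0 < b" "b \<le> 1"
  shows "exp (-y) \<le> y powr (-b)"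
proof -
  have "y powr b \<le> exp y"
  proof (cases "y \<le> 1")
    case True
    then have "y powr b \<le> 1" using assms by (intro powr_le1) auto
    then show ?thesis by (meson assms(1) less_imp_le one_le_exp_iff order_trans)
  next
    case False
    then have "y powr b \<le> y" using assms powr_mono[of b 1 y] by auto
    also have "y \<le> exp y" using exp_ge_add_one_self[of y] by linarith
    finally show ?thesis .
  qed
  then show ?thesis using assms by (simp add: exp_minus powr_minus le_imp_inverse_le)
qed

lemma nn_integral_powr_Icc_0:
  fixes c X :: real
  assumes "c > -1" "X \<ge> 0"
  shows "(\<integral>\<^sup>+x. ennreal (x powr c) * indicator {0..X} x \<partial>lborel) = ennreal (X powr (c + 1) / (c + 1))"
  by (rule nn_integral_has_integral_lebesgue'[OF _ has_integral_powr_from_0[OF assms]]) auto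

lemma nn_integral_powr_Icc_reflect:
  fixes c X Y :: real
  assumes "c > -1" "Y \<ge> 0"
  shows "(\<integral>\<^sup>+u. ennreal ((X - u) powr c) * indicator {X - Y..X} u \<partial>lborel) = ennreal (Y powr (c + 1) / (c + 1))"
proof -
  have "(\<integral>\<^sup>+u. ennreal ((X - u) powr c) * indicator {X - Y..X} u \<partial>lborel)
      = (\<integral>\<^sup>+v. ennreal ((X - (X + (-1) * v)) powr c) * indicator {X - Y..X} (X + (-1) * v) \<partial>lborel)"
    using nn_integral_real_affine[of "\<lambda>u. ennreal ((X - u) powr c) * indicator {X - Y..X} u" "-1" X] by simp
  also have "\<dots> = (\<integral>\<^sup>+v. ennreal (v powr c) * indicator {0..Y} v \<partial>lborel)"
    by (intro nn_integral_cong) (auto simp: indicator_def)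
  also have "\<dots> = ennreal (Y powr (c + 1) / (c + 1))"
    using assms by (rule nn_integral_powr_Icc_0)
  finally show ?thesis .
qed

(* On each half of (0,x) one factor is bounded by its value at x/2, and the exponential pays
   for half of the integrability margin a = beta + 1 via exp(-y) <= y^(-a/2). *)
lemma beta_exp_le_split:
  fixes \<beta> a \<mu> x u :: real
  assumes b: "\<beta> < 0" "a = \<beta> + 1" "0 < a" and m: "0 < \<mu>" and u: "0 < u" "u < x"
  shows "(x-u) powr \<beta> * u powr \<beta> * exp(-\<mu>*(x-u)) \<le>
    (x/2) powr \<beta> * \<mu> powr (-a/2) * ((if u \<le> x/2 then (x/2) powr (-a/2) * u powr \<beta> else 0)
       + (if x/2 \<le> u then (x-u) powr (a/2-1) else 0))"
proof -
  have half_a: "a/2 \<le> 1" "0 < a/2" using b by auto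
  show ?thesis
  proof (cases "u \<le> x/2")
    case True
    have e1: "(x-u) powr \<beta> \<le> (x/2) powr \<beta>" using True u b by (intro powr_mono2') auto
    have "exp(-\<mu>*(x-u)) \<le> exp(-(\<mu>*(x/2)))" using True m by simp
    also have "\<dots> \<le> (\<mu>*(x/2)) powr (-(a/2))" using m u half_a by (intro exp_minus_le_powr_minus) auto
    also have "\<dots> = \<mu> powr (-a/2) * (x/2) powr (-a/2)" using m u powr_mult[of \<mu> "x/2" "-(a/2)"] by simp
    finally have e2: "exp(-\<mu>*(x-u)) \<le> \<mu> powr (-a/2) * (x/2) powr (-a/2)" .
    have "(x-u) powr \<beta> * u powr \<beta> * exp(-\<mu>*(x-u)) \<le> (x/2) powr \<beta> * u powr \<beta> * (\<mu> powr (-a/2) * (x/2) powr (-a/2))"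
      using e1 e2 by (intro mult_mono) auto
    also have "\<dots> \<le> (x/2) powr \<beta> * \<mu> powr (-a/2) * ((if u \<le> x/2 then (x/2) powr (-a/2) * u powr \<beta> else 0)
       + (if x/2 \<le> u then (x-u) powr (a/2-1) else 0))"
      using True u by (simp add: algebra_simps)
    finally show ?thesis .
  next
    case False
    have e1: "u powr \<beta> \<le> (x/2) powr \<beta>" using False u b by (intro powr_mono2') auto
    have "exp(-\<mu>*(x-u)) = exp(-(\<mu>*(x-u)))" by simp
    also have "\<dots> \<le> (\<mu>*(x-u)) powr (-(a/2))" using m u half_a by (intro exp_minus_le_powr_minus) auto
    also have "\<dots> = \<mu> powr (-a/2) * (x-u) powr (-a/2)" using m u by (simp add: powr_mult)
    finally have e2: "exp(-\<mu>*(x-u)) \<le> \<mu> powr (-a/2) * (x-u) powr (-a/2)" .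
    have "(x-u) powr \<beta> * u powr \<beta> * exp(-\<mu>*(x-u)) = u powr \<beta> * ((x-u) powr \<beta> * exp(-\<mu>*(x-u)))"
      by simp
    also have "\<dots> \<le> (x/2) powr \<beta> * ((x-u) powr \<beta> * (\<mu> powr (-a/2) * (x-u) powr (-a/2)))"
      using e1 e2 by (intro mult_mono) auto
    also have "(x-u) powr \<beta> * (\<mu> powr (-a/2) * (x-u) powr (-a/2)) = \<mu> powr (-a/2) * (x-u) powr (a/2-1)"
      proof -
      have e: "\<beta> + (-a/2) = a/2 - 1" using b(2) by (simp add: field_simps)
      have "(x-u) powr \<beta> * (x-u) powr (-a/2) = (x-u) powr (a/2-1)"
        unfolding powr_add[symmetric] e ..
      then show ?thesis by (simp add: algebra_simps)
    qed
    also have "(x/2) powr \<beta> * (\<mu> powr (-a/2) * (x-u) powr (a/2-1)) = (x/2) powr \<beta> * \<mu> powr (-a/2)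
        * ((if u \<le> x/2 then (x/2) powr (-a/2) * u powr \<beta> else 0)
       + (if x/2 \<le> u then (x-u) powr (a/2-1) else 0))"
      using False by simp
    finally show ?thesis .
  qed
qed

lemma nn_integral_beta_exp_le:
  fixes \<beta> a \<mu> x :: real
  assumes b: "\<beta> < 0" "a = \<beta> + 1" "0 < a" and m: "0 < \<mu>" and x: "0 < x"
  shows "(\<integral>\<^sup>+u. ennreal ((x-u) powr \<beta> * u powr \<beta> * exp(-\<mu>*(x-u))) * indicator {0<..<x} u \<partial>lborel)
     \<le> ennreal ((x/2) powr \<beta> * \<mu> powr (-a/2) * ((x/2) powr (a/2) * (3/a)))"
proof -
  define C where "C = (x/2) powr \<beta> * \<mu> powr (-a/2)"
  have C_nonneg: "C \<ge> 0" by (simp add: C_def)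
  define F1 where "F1 u = ennreal ((x/2) powr (-a/2) * u powr \<beta>) * indicator {0..x/2} u" for u
  define F2 where "F2 u = ennreal ((x-u) powr (a/2-1)) * indicator {x/2..x} u" for u
  have [measurable]: "F1 \<in> borel_measurable borel" "F2 \<in> borel_measurable borel"
    unfolding F1_def[abs_def] F2_def[abs_def] by measurable
  have "(\<integral>\<^sup>+u. ennreal ((x-u) powr \<beta> * u powr \<beta> * exp(-\<mu>*(x-u))) * indicator {0<..<x} u \<partial>lborel)
     \<le> (\<integral>\<^sup>+u. ennreal C * (F1 u + F2 u) \<partial>lborel)"
  proof (rule nn_integral_mono)
    fix u
    show "ennreal ((x-u) powr \<beta> * u powr \<beta> * exp(-\<mu>*(x-u))) * indicator {0<..<x} u \<le> ennreal C * (F1 u + F2 u)"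
    proof (cases "0 < u \<and> u < x")
      case True
      have "ennreal ((x-u) powr \<beta> * u powr \<beta> * exp(-\<mu>*(x-u))) \<le>
        ennreal (C * ((if u \<le> x/2 then (x/2) powr (-a/2) * u powr \<beta> else 0)
       + (if x/2 \<le> u then (x-u) powr (a/2-1) else 0)))"
        using beta_exp_le_split[OF b m, of u x] True by (intro ennreal_leI) (simp add: C_def)
      also have "\<dots> = ennreal C * (F1 u + F2 u)"
        using True C_nonneg by (auto simp: F1_def F2_def ennreal_mult[symmetric] ennreal_plus[symmetric]
            simp del: ennreal_plus)
      finally show ?thesis using True by simp
    qed auto
  qed
  also have "\<dots> = ennreal C * ((\<integral>\<^sup>+u. F1 u \<partial>lborel) + (\<integral>\<^sup>+u. F2 u \<partial>lborel))"
    by (simp add: nn_integral_cmult nn_integral_add)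
  also have "(\<integral>\<^sup>+u. F1 u \<partial>lborel) = ennreal ((x/2) powr (-a/2)) * ennreal ((x/2) powr a / a)"
  proof -
    have "(\<integral>\<^sup>+u. F1 u \<partial>lborel) = ennreal ((x/2) powr (-a/2)) * (\<integral>\<^sup>+u. ennreal (u powr \<beta>)
        * indicator {0..x/2} u \<partial>lborel)"
      unfolding F1_def by (subst nn_integral_cmult[symmetric]) (auto simp: ennreal_mult mult.assoc)
    also have "(\<integral>\<^sup>+u. ennreal (u powr \<beta>) * indicator {0..x/2} u \<partial>lborel) = ennreal ((x/2) powr (\<beta>+1) / (\<beta>+1))"
      using b x by (intro nn_integral_powr_Icc_0) auto
    finally show ?thesis using b by simp
  qed
  also have "(\<integral>\<^sup>+u. F2 u \<partial>lborel) = ennreal ((x/2) powr (a/2) / (a/2))"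
    using nn_integral_powr_Icc_reflect[of "a/2 - 1" "x/2" x] b(3) x by (simp add: F2_def)
  also have "ennreal C * (ennreal ((x/2) powr (-a/2)) * ennreal ((x/2) powr a / a) +
      ennreal ((x/2) powr (a/2) / (a/2)))
     = ennreal (C * ((x/2) powr (-a/2) * ((x/2) powr a / a) + (x/2) powr (a/2) / (a/2)))"
    using C_nonneg b by (simp add: ennreal_mult[symmetric] ennreal_plus[symmetric] del: ennreal_plus)
  also have "(x/2) powr (-a/2) * ((x/2) powr a / a) + (x/2) powr (a/2) / (a/2) = (x/2) powr (a/2) * (3/a)"
  proof -
    have "(x/2) powr (-a/2) * (x/2) powr a = (x/2) powr (a/2)"
      by (simp add: powr_add[symmetric])
    then show ?thesis using b(3) by (simp add: field_simps)
  qed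
  finally show ?thesis by (simp add: C_def mult.assoc)
qed

definition sing_kernel :: "real \<Rightarrow> real \<Rightarrow> real" where
  "sing_kernel \<nu> x = (if 0 < x then x powr (\<nu> - 1) else 0)"

(* The integral runs over the whole line: the kernel vanishes for s >= t, and L will vanish for
   s < 0, so for mu = 0 this is the singular integral over (0,t) of the hypothesis. *)
definition volterra :: "real \<Rightarrow> (real \<Rightarrow> real) \<Rightarrow> real \<Rightarrow> (real \<Rightarrow> ennreal) \<Rightarrow> real \<Rightarrow> ennreal" where
  "volterra \<nu> L \<mu> f t =
     (\<integral>\<^sup>+s. ennreal (L s) * ennreal (sing_kernel \<nu> (t - s) * exp (\<mu> * (t - s))) * f s \<partial>lborel)"

lemma sing_kernel_nonneg: "sing_kernel \<nu> x \<ge> 0"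
  by (simp add: sing_kernel_def)

lemma sing_kernel_measurable[measurable]: "sing_kernel \<nu> \<in> borel_measurable borel"
  unfolding sing_kernel_def by measurable

lemma volterra_measurable[measurable]:
  assumes [measurable]: "L \<in> borel_measurable borel" "f \<in> borel_measurable borel"
  shows "volterra \<nu> L \<mu> f \<in> borel_measurable borel"
  unfolding volterra_def[abs_def] by (rule lborel.borel_measurable_nn_integral) measurable

lemma volterra_add:
  assumes [measurable]: "L \<in> borel_measurable borel" "f \<in> borel_measurable borel" "g \<in> borel_measurable borel"
  shows "volterra \<nu> L \<mu> (\<lambda>s. f s + g s) t = volterra \<nu> L \<mu> f t + volterra \<nu> L \<mu> g t"
  unfolding volterra_def by (simp add: distrib_left nn_integral_add)

lemma volterra_cmult:
  assumes [measurable]: "L \<in> borel_measurable borel" "f \<in> borel_measurable borel"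
  shows "volterra \<nu> L \<mu> (\<lambda>s. c * f s) t = c * volterra \<nu> L \<mu> f t"
  unfolding volterra_def by (subst nn_integral_cmult[symmetric]) (auto simp: mult_ac)

lemma volterra_sum:
  assumes [measurable]: "L \<in> borel_measurable borel" "\<And>j. j \<in> J \<Longrightarrow> f j \<in> borel_measurable borel"
  shows "volterra \<nu> L \<mu> (\<lambda>s. \<Sum>j\<in>J. f j s) t = (\<Sum>j\<in>J. volterra \<nu> L \<mu> (f j) t)"
  unfolding volterra_def by (simp add: sum_distrib_left nn_integral_sum)

lemma volterra_mono:
  assumes "\<And>s. f s \<le> g s"
  shows "volterra \<nu> L \<mu> f t \<le> volterra \<nu> L \<mu> g t"
  unfolding volterra_def by (intro nn_integral_mono mult_left_mono assms) auto

lemma volterra_le_add: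
  assumes "\<And>s. f s \<le> g s + d s"
    and [measurable]: "L \<in> borel_measurable borel" "g \<in> borel_measurable borel" "d \<in> borel_measurable borel"
  shows "volterra \<nu> L \<mu> f t \<le> volterra \<nu> L \<mu> g t + volterra \<nu> L \<mu> d t"
proof -
  have "volterra \<nu> L \<mu> f t \<le> volterra \<nu> L \<mu> (\<lambda>s. g s + d s) t"
    using assms(1) by (rule volterra_mono)
  also have "\<dots> = volterra \<nu> L \<mu> g t + volterra \<nu> L \<mu> d t"
    by (rule volterra_add) measurable
  finally show ?thesis .
qed

lemma volterra_mono_rate:
  assumes "\<mu> \<le> \<mu>'"
  shows "volterra \<nu> L \<mu> f t \<le> volterra \<nu> L \<mu>' f t"
  unfolding volterra_def
proof (intro nn_integral_mono mult_right_mono)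
  fix s
  have "sing_kernel \<nu> (t - s) * exp (\<mu> * (t - s)) \<le> sing_kernel \<nu> (t - s) * exp (\<mu>' * (t - s))"
    using assms by (cases "0 < t - s") (auto simp: sing_kernel_def intro!: mult_left_mono mult_right_mono)
  then show "ennreal (L s) * ennreal (sing_kernel \<nu> (t - s) * exp (\<mu> * (t - s))) \<le> ennreal (L s) *
      ennreal (sing_kernel \<nu> (t - s) * exp (\<mu>' * (t - s)))"
    by (rule mult_left_mono[OF ennreal_leI]) auto
qed auto

lemma volterra_le_exp_mult:
  assumes "\<mu> \<ge> 0" "t \<le> T" "\<And>s. s < 0 \<Longrightarrow> L s = 0"
    and [measurable]: "L \<in> borel_measurable borel" "f \<in> borel_measurable borel"
  shows "volterra \<nu> L \<mu> f t \<le> ennreal (exp (\<mu>*T)) * volterra \<nu> L 0 f t"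
  unfolding volterra_def
proof (subst nn_integral_cmult[symmetric], measurable, intro nn_integral_mono)
  fix s
  have "ennreal (L s) * ennreal (sing_kernel \<nu> (t - s) * exp (\<mu> * (t - s))) \<le> ennreal (exp (\<mu>*T))
      * (ennreal (L s) * ennreal (sing_kernel \<nu> (t - s) * exp (0 * (t - s))))"
  proof (cases "s < 0 \<or> t - s \<le> 0")
    case True
    then show ?thesis using assms by (auto simp: sing_kernel_def)
  next
    case False
    then have "exp (\<mu> * (t - s)) \<le> exp (\<mu>*T)" using assms by (auto intro!: mult_left_mono)
    then have "sing_kernel \<nu> (t - s) * exp (\<mu> * (t - s)) \<le> sing_kernel \<nu> (t - s) * exp (\<mu>*T)"
      by (rule mult_left_mono) (simp add: sing_kernel_nonneg)
    then have "sing_kernel \<nu> (t - s) * exp (\<mu> * (t - s)) \<le> exp (\<mu>*T) * sing_kernel \<nu> (t - s)"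
      by (simp add: mult.commute)
    then have "ennreal (sing_kernel \<nu> (t - s) * exp (\<mu> * (t - s))) \<le> ennreal (exp (\<mu>*T)) *
        ennreal (sing_kernel \<nu> (t - s))"
      by (simp add: ennreal_mult[symmetric] sing_kernel_nonneg ennreal_leI)
    then show ?thesis
      by (simp add: mult_ac) (metis mult.commute mult.left_commute mult_left_mono zero_le)
  qed
  then show "ennreal (L s) * ennreal (sing_kernel \<nu> (t - s) * exp (\<mu> * (t - s))) * f s \<le>
      ennreal (exp (\<mu>*T)) * (ennreal (L s) * ennreal (sing_kernel \<nu> (t - s) * exp (0 * (t - s))) * f s)"
    by (metis mult.assoc mult_right_mono zero_le)
qed

lemma volterra_eq_0:
  assumes "\<And>s. s < t \<Longrightarrow> ennreal (L s) * f s = 0"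
  shows "volterra \<nu> L \<mu> f t = 0"
proof -
  have "ennreal (L s) * ennreal (sing_kernel \<nu> (t - s) * exp (\<mu> * (t - s))) * f s = 0" for s
  proof (cases "s < t")
    case True
    then have "ennreal (L s) * f s = 0" by (rule assms)
    then show ?thesis by (metis mult.assoc mult.commute mult_zero_left)
  qed (auto simp: sing_kernel_def)
  then have "(\<lambda>s. ennreal (L s) * ennreal (sing_kernel \<nu> (t - s) * exp (\<mu> * (t - s))) * f s) = (\<lambda>s. 0)"
    by (intro ext)
  then show ?thesis unfolding volterra_def by simp
qed

lemma volterra_cong_before:
  assumes "\<And>s. s < t \<Longrightarrow> f s = g s"
  shows "volterra \<nu> L \<mu> f t = volterra \<nu> L \<mu> g t"
  unfolding volterra_def
proof (intro nn_integral_cong)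
  fix s
  show "ennreal (L s) * ennreal (sing_kernel \<nu> (t - s) * exp (\<mu> * (t - s))) * f s
      = ennreal (L s) * ennreal (sing_kernel \<nu> (t - s) * exp (\<mu> * (t - s))) * g s"
    using assms by (cases "s < t") (auto simp: sing_kernel_def)
qed

lemma volterra_mult_exp:
  assumes [measurable]: "L \<in> borel_measurable borel" "f \<in> borel_measurable borel"
  shows "volterra \<nu> L 0 f t * ennreal (exp (\<mu> * t)) = volterra \<nu> L \<mu> (\<lambda>s. f s * ennreal (exp (\<mu> * s))) t"
proof -
  have "volterra \<nu> L 0 f t * ennreal (exp (\<mu> * t))
      = (\<integral>\<^sup>+s. ennreal (L s) * ennreal (sing_kernel \<nu> (t - s) * exp (0 * (t - s))) * f s *
          ennreal (exp (\<mu> * t)) \<partial>lborel)"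
    unfolding volterra_def by (rule nn_integral_multc[symmetric]) measurable
  also have "\<dots> = volterra \<nu> L \<mu> (\<lambda>s. f s * ennreal (exp (\<mu> * s))) t"
    unfolding volterra_def
  proof (intro nn_integral_cong)
    fix s
    have "exp (\<mu> * t) = exp (\<mu> * (t - s)) * exp (\<mu> * s)"
      by (simp add: exp_add[symmetric] algebra_simps)
    then show "ennreal (L s) * ennreal (sing_kernel \<nu> (t - s) * exp (0 * (t - s))) * f s * ennreal (exp (\<mu> * t))
        = ennreal (L s) * ennreal (sing_kernel \<nu> (t - s) * exp (\<mu> * (t - s))) * (f s * ennreal (exp (\<mu> * s)))"
      by (simp add: ennreal_mult[symmetric] sing_kernel_nonneg mult_ac)
  qed
  finally show ?thesis .
qed

lemma volterra_delay_eq_0: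
  assumes [measurable]: "L \<in> borel_measurable borel" "f \<in> borel_measurable borel"
    and f_zero: "AE s in lborel. s < c \<longrightarrow> f s = 0" and t: "t < c + h"
  shows "volterra \<nu> L \<mu> (\<lambda>s. f (s - h)) t = 0"
proof -
  have "volterra \<nu> L \<mu> (\<lambda>s. f (s - h)) t
      = (\<integral>\<^sup>+r. ennreal (L (h + r)) * ennreal (sing_kernel \<nu> (t - (h + r)) * exp (\<mu> * (t - (h + r))))
          * f r \<partial>lborel)"
    unfolding volterra_def
    using nn_integral_real_affine[of
        "\<lambda>s. ennreal (L s) * ennreal (sing_kernel \<nu> (t - s) * exp (\<mu> * (t - s))) * f (s - h)" 1 h]
    by simp
  also have "\<dots> = 0"
  proof (subst nn_integral_0_iff_AE)
    show "AE r in lborel.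
        ennreal (L (h + r)) * ennreal (sing_kernel \<nu> (t - (h + r)) * exp (\<mu> * (t - (h + r)))) * f r = 0"
      using f_zero
    proof eventually_elim
      case (elim r)
      show ?case
      proof (cases "r < c")
        case False
        then have "t - (h + r) \<le> 0" using t by simp
        then show ?thesis by (simp add: sing_kernel_def)
      qed (use elim in simp)
    qed
  qed measurable
  finally show ?thesis .
qed

lemma volterra_add_cmult:
  assumes [measurable]: "L \<in> borel_measurable borel" "f \<in> borel_measurable borel" "g \<in> borel_measurable borel"
  shows "volterra \<nu> L \<mu> (\<lambda>s. f s + c * g s) t = volterra \<nu> L \<mu> f t + c * volterra \<nu> L \<mu> g t"
proof -
  have "volterra \<nu> L \<mu> (\<lambda>s. f s + c * g s) t = volterra \<nu> L \<mu> f t + volterra \<nu> L \<mu> (\<lambda>s. c * g s) t"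
    by (rule volterra_add) measurable
  also have "volterra \<nu> L \<mu> (\<lambda>s. c * g s) t = c * volterra \<nu> L \<mu> g t"
    by (rule volterra_cmult) measurable
  finally show ?thesis .
qed

lemma sing_int_eq_volterra:
  fixes L L' f f' :: "real \<Rightarrow> real"
  assumes t: "0 \<le> t" and Ln: "\<And>s. 0 \<le> L s" and fn: "\<And>s. 0 \<le> f s"
    and L'z: "\<And>s. s < 0 \<Longrightarrow> L' s = 0"
    and eq: "\<And>s. 0 < s \<Longrightarrow> s < t \<Longrightarrow> L' s = L s \<and> f' s = f s"
  shows "sing_int \<nu> 0 t t (\<lambda>s. L s * f s) = volterra \<nu> L' 0 (\<lambda>s. ennreal (f' s)) t"
  unfolding sing_int_def volterra_def
proof (rule nn_integral_cong_AE)
  show "AE s in lborel. ennreal (L s * f s / (t - s) powr (1 - \<nu>)) * indicator {0..t} s =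
      ennreal (L' s) * ennreal (sing_kernel \<nu> (t - s) * exp (0 * (t - s))) * ennreal (f' s)"
    using AE_lborel_singleton[of 0]
  proof eventually_elim
    case (elim s)
    show ?case
    proof (cases "0 < s \<and> s < t")
      case True
      then have "L' s = L s" "f' s = f s" using eq by auto
      moreover have "sing_kernel \<nu> (t - s) = inverse ((t - s) powr (1 - \<nu>))"
        using True by (simp add: sing_kernel_def powr_minus[symmetric])
      ultimately show ?thesis using True Ln[of s] fn[of s]
        by (simp add: ennreal_mult[symmetric] divide_inverse mult_ac)
    next
      case False
      then consider "s < 0" | "s = t" | "s > t" using elim by fastforce
      then show ?thesis
      proof cases
        case 1 then show ?thesis using L'z by simp
      next
        case 2 then show ?thesis by (simp add: sing_kernel_def)
      next
        case 3 then show ?thesis by (simp add: sing_kernel_def)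
      qed
    qed
  qed
qed

lemma volterra_le_sing_int:
  fixes L f :: "real \<Rightarrow> real"
  assumes L_nonneg: "\<And>s. 0 \<le> L s" and f_nonneg: "\<And>s. 0 \<le> f s"
    and below: "\<And>s. s < c \<Longrightarrow> L s * f s = 0"
  shows "volterra \<nu> L 0 (\<lambda>s. ennreal (f s)) t \<le> sing_int \<nu> c t t (\<lambda>s. L s * f s)"
  unfolding sing_int_def volterra_def
proof (rule nn_integral_mono)
  fix s
  show "ennreal (L s) * ennreal (sing_kernel \<nu> (t - s) * exp (0 * (t - s))) * ennreal (f s)
     \<le> ennreal (L s * f s / (t - s) powr (1 - \<nu>)) * indicator {c..t} s"
  proof (cases "c \<le> s \<and> s < t")
    case True
    then have "sing_kernel \<nu> (t - s) = inverse ((t - s) powr (1 - \<nu>))"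
      by (simp add: sing_kernel_def powr_minus[symmetric])
    with True L_nonneg[of s] f_nonneg[of s] show ?thesis
      by (simp add: ennreal_mult[symmetric] divide_inverse mult_ac)
  next
    case False
    then consider "s < c" | "s \<ge> t" by fastforce
    then show ?thesis
    proof cases
      case 1
      with below L_nonneg f_nonneg have "ennreal (L s) * ennreal (f s) = 0"
        by (simp add: ennreal_mult[symmetric])
      then show ?thesis by (metis mult.commute mult.left_commute mult_zero_left zero_le)
    next
      case 2 then show ?thesis by (simp add: sing_kernel_def)
    qed
  qed
qed

locale Lq_coefficient =
  fixes \<nu> q T :: real and L :: "real \<Rightarrow> real"
  assumes nu_bounds: "0 < \<nu>" "\<nu> < 1" and q_gt: "q > 1/\<nu>" and T_pos: "0 < T"
    and L_nonneg: "\<And>t. L t \<ge> 0"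
    and L_outside: "\<And>t. t < 0 \<or> t > T \<Longrightarrow> L t = 0"
    and L_measurable[measurable]: "L \<in> borel_measurable borel"
    and L_Lq: "(\<integral>\<^sup>+t. ennreal (L t powr q) \<partial>lborel) < \<infinity>"
begin

(* p is the exponent conjugate to q, and beta = (nu - 1) p is the exponent of the p-th power of the
   kernel, integrable near 0 because a = beta + 1 > 0. Lambda bounds int L^q (the + 1 keeps it positive).
   lam is chosen so that weight_constant_eq holds, which makes both Hoelder bounds below equal to
   Lambda^(1/q) delta^(1/p) = 1/4. *)
definition "p = q/(q-1)"
definition "\<beta> = (\<nu>-1)*p"
definition "a = \<beta> + 1"
definition "\<Lambda> = enn2real (\<integral>\<^sup>+t. ennreal (L t powr q) \<partial>lborel) + 1"
definition "CT = 2 powr (-\<beta>) * T powr (a/2) * (3/a)"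
definition "\<delta> = (1/(4*\<Lambda> powr (1/q))) powr p"
definition "lam = ((CT/\<delta>) powr (2/a)) / p"

lemma q_gt_1: "q > 1"
proof -
  have "1/\<nu> > 1" using nu_bounds by simp
  then show ?thesis using q_gt by simp
qed

lemma p_gt_1: "p > 1" using q_gt_1 by (simp add: p_def field_simps)
lemma pq: "1/q + 1/p = 1" using q_gt_1 by (simp add: p_def field_simps)
lemma \<beta>_neg: "\<beta> < 0" using nu_bounds p_gt_1 by (simp add: \<beta>_def mult_neg_pos)

lemma a_pos: "0 < a"
proof -
  have "\<nu> * q > 1" using q_gt nu_bounds by (simp add: field_simps)
  then have "((\<nu>-1)*q + (q - 1))/(q-1) > 0" using q_gt_1 by (simp add: algebra_simps)
  also have "((\<nu>-1)*q + (q - 1))/(q-1) = a" using q_gt_1 by (simp add: a_def \<beta>_def p_def field_simps)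
  finally show ?thesis .
qed

lemma \<Lambda>_pos: "\<Lambda> > 0" unfolding \<Lambda>_def by (smt (verit) enn2real_nonneg)

lemma L_Lq_le: "(\<integral>\<^sup>+t. ennreal (L t powr q) \<partial>lborel) \<le> ennreal \<Lambda>"
  using L_Lq by (auto simp: \<Lambda>_def ennreal_enn2real_if)

lemma CT_pos: "CT > 0" using a_pos T_pos by (simp add: CT_def)
lemma delta_pos: "\<delta> > 0" using \<Lambda>_pos by (simp add: \<delta>_def)
lemma lam_pos: "lam > 0" using CT_pos delta_pos p_gt_1 by (simp add: lam_def)

lemma weight_constant_eq: "2 powr (-\<beta>) * (lam*p) powr (-a/2) * T powr (a/2) * (3/a) = \<delta>"
proof -
  have "lam * p = (CT/\<delta>) powr (2/a)" using p_gt_1 by (simp add: lam_def)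
  then have "(lam*p) powr (-a/2) = (CT/\<delta>) powr ((2/a)*(-a/2))" by (simp add: powr_powr)
  also have "(2/a)*(-a/2) = -1" using a_pos by simp
  also have "(CT/\<delta>) powr (-1) = \<delta>/CT" using CT_pos delta_pos by (simp add: powr_minus_divide)
  finally show ?thesis using CT_pos a_pos T_pos delta_pos by (simp add: CT_def field_simps)
qed

lemma Hoelder_constant_eq: "\<Lambda> powr (1/q) * \<delta> powr (1/p) = 1/4"
proof -
  have "\<delta> powr (1/p) = 1/(4*\<Lambda> powr (1/q))"
    unfolding \<delta>_def using p_gt_1 \<Lambda>_pos by (simp add: powr_powr)
  then show ?thesis using \<Lambda>_pos by simp
qed

lemma Hoelder_constant_kernel_eq:
  assumes "0 < x"
  shows "\<Lambda> powr (1/q) * (exp (lam*p*x) * x powr \<beta> * \<delta>) powr (1/p) = 1/4 * (sing_kernel \<nu> x * exp (lam * x))"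
proof -
  have "(exp (lam*p*x) * x powr \<beta> * \<delta>) powr (1/p)
      = exp (lam*p*x) powr (1/p) * (x powr \<beta>) powr (1/p) * \<delta> powr (1/p)"
    using delta_pos by (simp add: powr_mult)
  also have "\<dots> = exp (lam*x) * sing_kernel \<nu> x * \<delta> powr (1/p)"
    using p_gt_1 assms by (simp add: powr_def \<beta>_def sing_kernel_def powr_powr)
  finally show ?thesis using Hoelder_constant_eq by (simp add: mult_ac)
qed

lemma nn_integral_L_mult_le:
  assumes [measurable]: "g \<in> borel_measurable borel" and "\<And>t. g t \<ge> 0"
    and "(\<integral>\<^sup>+t. ennreal (g t powr p) \<partial>lborel) \<le> ennreal D" "D \<ge> 0"
  shows "(\<integral>\<^sup>+t. ennreal (L t * g t) \<partial>lborel) \<le> ennreal (\<Lambda> powr (1/q) * D powr (1/p))"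
  by (rule nn_integral_Hoelder[OF q_gt_1 p_gt_1 pq]) (use assms L_nonneg L_Lq_le \<Lambda>_pos in auto)

lemma kernel_product_powr_eq:
  assumes "0 < u" "u < x"
  shows "(sing_kernel \<nu> (x-u) * sing_kernel \<nu> u * exp(lam*u)) powr p
     = exp(lam*p*x) * ((x-u) powr \<beta> * u powr \<beta> * exp(-(lam*p)*(x-u)))"
proof -
  have "(sing_kernel \<nu> (x-u) * sing_kernel \<nu> u * exp(lam*u)) powr p
      = ((x-u) powr (\<nu>-1)) powr p * (u powr (\<nu>-1)) powr p * exp(lam*u) powr p"
    using assms by (simp add: sing_kernel_def powr_mult)
  also have "\<dots> = (x-u) powr \<beta> * u powr \<beta> * exp(lam*p*u)"
  proof -
    have "exp(lam*u) powr p = exp(lam*p*u)" by (simp add: powr_def mult_ac)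
    then show ?thesis by (simp add: powr_powr \<beta>_def mult_ac)
  qed
  also have "exp(lam*p*u) = exp(lam*p*x) * exp(-(lam*p)*(x-u))"
    by (simp add: exp_add[symmetric] algebra_simps)
  finally show ?thesis by simp
qed

lemma beta_exp_bound_le_delta:
  assumes x: "0 < x" "x \<le> 2*T"
  shows "(x/2) powr \<beta> * (lam*p) powr (-a/2) * ((x/2) powr (a/2) * (3/a)) \<le> x powr \<beta> * \<delta>"
proof -
  have "(x/2) powr (a/2) * (3/a) \<le> T powr (a/2) * (3/a)"
    using x a_pos by (intro mult_right_mono powr_mono2) auto
  then have "(x/2) powr \<beta> * (lam*p) powr (-a/2) * ((x/2) powr (a/2) * (3/a))
      \<le> (x/2) powr \<beta> * (lam*p) powr (-a/2) * (T powr (a/2) * (3/a))"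
    by (intro mult_left_mono) auto
  also have "\<dots> = x powr \<beta> * \<delta>"
  proof -
    have "(x/2) powr \<beta> = x powr \<beta> * 2 powr (-\<beta>)"
      using x by (simp add: powr_divide powr_minus_divide)
    then show ?thesis by (simp flip: weight_constant_eq add: mult_ac)
  qed
  finally show ?thesis .
qed

lemma weighted_bound_le_delta: "(lam*p) powr (-a/2) * (T powr (a/2) / (a/2)) \<le> \<delta>"
proof -
  have "1 \<le> 2 powr (-\<beta>)" using \<beta>_neg by (intro ge_one_powr_ge_zero) auto
  then have "2/a \<le> 2 powr (-\<beta>) * (3/a)"
    using a_pos by (smt (verit) divide_right_mono mult_right_mono mult_cancel_right1 zero_le_divide_iff)
  then have "(lam*p) powr (-a/2) * T powr (a/2) * (2/a) \<le> (lam*p) powr (-a/2) * T powr (a/2)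
      * (2 powr (-\<beta>) * (3/a))"
    by (intro mult_left_mono) auto
  then show ?thesis by (simp flip: weight_constant_eq add: mult_ac)
qed

lemma nn_integral_kernel_product_powr_le:
  assumes x: "0 < x" "x \<le> 2*T"
  shows "(\<integral>\<^sup>+u. ennreal ((sing_kernel \<nu> (x-u) * sing_kernel \<nu> u * exp(lam*u)) powr p) \<partial>lborel)
     \<le> ennreal (exp(lam*p*x) * x powr \<beta> * \<delta>)"
proof -
  have lam_p_pos: "0 < lam*p" using lam_pos p_gt_1 by simp
  have "(\<integral>\<^sup>+u. ennreal ((sing_kernel \<nu> (x-u) * sing_kernel \<nu> u * exp(lam*u)) powr p) \<partial>lborel)
     = (\<integral>\<^sup>+u. ennreal (exp(lam*p*x)) * (ennreal ((x-u) powr \<beta> * u powr \<beta> * exp(-(lam*p)*(x-u)))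
         * indicator {0<..<x} u) \<partial>lborel)"
  proof (intro nn_integral_cong)
    fix u
    show "ennreal ((sing_kernel \<nu> (x-u) * sing_kernel \<nu> u * exp(lam*u)) powr p) =
      ennreal (exp(lam*p*x)) * (ennreal ((x-u) powr \<beta> * u powr \<beta> * exp(-(lam*p)*(x-u))) * indicator {0<..<x} u)"
    proof (cases "0 < u \<and> u < x")
      case True
      then show ?thesis using kernel_product_powr_eq[of u x] by (simp add: ennreal_mult[symmetric])
    next
      case False
      then have "sing_kernel \<nu> (x-u) * sing_kernel \<nu> u = 0" by (auto simp: sing_kernel_def)
      then show ?thesis using False by auto
    qed
  qed
  also have "\<dots> = ennreal (exp(lam*p*x)) * (\<integral>\<^sup>+u. ennreal ((x-u) powr \<beta> * u powr \<beta>
      * exp(-(lam*p)*(x-u))) * indicator {0<..<x} u \<partial>lborel)"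
    by (rule nn_integral_cmult) measurable
  also have "\<dots> \<le> ennreal (exp(lam*p*x)) * ennreal ((x/2) powr \<beta> * (lam*p) powr (-a/2)
      * ((x/2) powr (a/2) * (3/a)))"
    by (intro mult_left_mono nn_integral_beta_exp_le[OF \<beta>_neg _ a_pos lam_p_pos x(1)]) (auto simp: a_def)
  also have "(x/2) powr \<beta> * (lam*p) powr (-a/2) * ((x/2) powr (a/2) * (3/a)) \<le> x powr \<beta> * \<delta>"
    using x by (rule beta_exp_bound_le_delta)
  then have "ennreal (exp(lam*p*x)) * ennreal ((x/2) powr \<beta> * (lam*p) powr (-a/2) * ((x/2) powr (a/2) * (3/a)))
      \<le> ennreal (exp(lam*p*x)) * ennreal (x powr \<beta> * \<delta>)"
    by (intro mult_left_mono ennreal_leI) auto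
  also have "\<dots> = ennreal (exp(lam*p*x) * x powr \<beta> * \<delta>)"
    using delta_pos by (simp add: ennreal_mult[symmetric] mult.assoc)
  finally show ?thesis .
qed

lemma nn_integral_weighted_kernel_powr_le:
  "(\<integral>\<^sup>+v. ennreal ((sing_kernel \<nu> v * exp(-(lam* v))) powr p) * indicator {..T} v \<partial>lborel) \<le> ennreal \<delta>"
proof -
  have lam_p_pos: "0 < lam*p" using lam_pos p_gt_1 by simp
  have "(\<integral>\<^sup>+v. ennreal ((sing_kernel \<nu> v * exp(-(lam* v))) powr p) * indicator {..T} v \<partial>lborel)
     \<le> (\<integral>\<^sup>+v. ennreal ((lam*p) powr (-a/2)) * (ennreal (v powr (a/2-1)) * indicator {0..T} v) \<partial>lborel)"
  proof (intro nn_integral_mono)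
    fix v
    show "ennreal ((sing_kernel \<nu> v * exp(-(lam* v))) powr p) * indicator {..T} v
      \<le> ennreal ((lam*p) powr (-a/2)) * (ennreal (v powr (a/2-1)) * indicator {0..T} v)"
    proof (cases "0 < v \<and> v \<le> T")
      case True
      have "(sing_kernel \<nu> v * exp(-(lam* v))) powr p = v powr \<beta> * exp (-(lam*p* v))"
      proof -
        have "exp(-(lam* v)) powr p = exp(-(lam*p* v))" by (simp add: powr_def mult_ac)
        then show ?thesis using True by (simp add: sing_kernel_def powr_mult powr_powr \<beta>_def mult_ac)
      qed
      also have "\<dots> \<le> v powr \<beta> * (lam*p* v) powr (-(a/2))"
        using True lam_p_pos a_pos \<beta>_neg by (intro mult_left_mono exp_minus_le_powr_minus) (auto simp: a_def)
      also have "\<dots> = (lam*p) powr (-a/2) * (v powr \<beta> * v powr (-a/2))"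
        using True lam_p_pos by (simp add: powr_mult)
      also have "v powr \<beta> * v powr (-a/2) = v powr (a/2-1)"
      proof -
        have e: "\<beta> + (-a/2) = a/2 - 1" by (simp add: a_def field_simps)
        show ?thesis unfolding powr_add[symmetric] e ..
      qed
      finally show ?thesis using True by (simp add: ennreal_mult[symmetric])
    next
      case False
      then show ?thesis by (auto simp: sing_kernel_def indicator_def)
    qed
  qed
  also have "\<dots> = ennreal ((lam*p) powr (-a/2)) * (\<integral>\<^sup>+v. ennreal (v powr (a/2-1)) * indicator {0..T} v \<partial>lborel)"
    by (rule nn_integral_cmult) measurable
  also have "(\<integral>\<^sup>+v. ennreal (v powr (a/2-1)) * indicator {0..T} v \<partial>lborel) = ennreal (T powr (a/2-1+1)/(a/2-1+1))"
    using a_pos T_pos by (intro nn_integral_powr_Icc_0) auto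
  also have "ennreal ((lam*p) powr (-a/2)) * ennreal (T powr (a/2-1+1)/(a/2-1+1)) \<le> ennreal \<delta>"
    using weighted_bound_le_delta a_pos by (subst ennreal_mult[symmetric]) (auto intro!: ennreal_leI)
  finally show ?thesis .
qed

lemma kernel_convolution_le:
  assumes "0 \<le> c" "t \<le> T"
  shows "(\<integral>\<^sup>+s. ennreal (L s) * ennreal (sing_kernel \<nu> (t - s))
            * ennreal (sing_kernel \<nu> (s - c) * exp (lam * (s - c))) \<partial>lborel)
    \<le> ennreal (1/4) * ennreal (sing_kernel \<nu> (t - c) * exp (lam * (t - c)))"
proof (cases "c < t")
  case False
  then have "sing_kernel \<nu> (t - s) = 0 \<or> sing_kernel \<nu> (s - c) = 0" for s
    by (auto simp: sing_kernel_def)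
  then have "ennreal (L s) * ennreal (sing_kernel \<nu> (t - s))
      * ennreal (sing_kernel \<nu> (s - c) * exp (lam * (s - c))) = 0" for s
    by (metis ennreal_0 mult_zero_left mult_zero_right)
  then show ?thesis by (simp only: nn_integral_const mult_zero_left zero_le)
next
  case True
  define x where "x = t - c"
  have x: "0 < x" "x \<le> 2*T" using True assms T_pos by (auto simp: x_def)
  define g where "g s = sing_kernel \<nu> (t - s) * sing_kernel \<nu> (s - c) * exp (lam * (s - c))" for s
  have g_nonneg: "g s \<ge> 0" for s by (simp add: g_def sing_kernel_nonneg)
  have [measurable]: "g \<in> borel_measurable borel" unfolding g_def[abs_def] by measurable
  have "(\<integral>\<^sup>+s. ennreal (L s) * ennreal (sing_kernel \<nu> (t - s))
            * ennreal (sing_kernel \<nu> (s - c) * exp (lam * (s - c))) \<partial>lborel)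
      = (\<integral>\<^sup>+s. ennreal (L s * g s) \<partial>lborel)"
    using L_nonneg by (simp add: g_def ennreal_mult sing_kernel_nonneg mult.assoc)
  also have "\<dots> \<le> ennreal (\<Lambda> powr (1/q) * (exp (lam*p*x) * x powr \<beta> * \<delta>) powr (1/p))"
  proof (rule nn_integral_L_mult_le)
    show "g \<in> borel_measurable borel" by measurable
    show "\<And>s. 0 \<le> g s" "0 \<le> exp (lam*p*x) * x powr \<beta> * \<delta>"
      using g_nonneg delta_pos by auto
    have "(\<integral>\<^sup>+s. ennreal (g s powr p) \<partial>lborel) = (\<integral>\<^sup>+u. ennreal (g (c + 1 * u) powr p) \<partial>lborel)"
      using nn_integral_real_affine[of "\<lambda>s. ennreal (g s powr p)" 1 c] by simp
    also have "\<dots> = (\<integral>\<^sup>+u. ennreal ((sing_kernel \<nu> (x - u) * sing_kernel \<nu> u * exp (lam * u)) powr p) \<partial>lborel)"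
      by (simp add: g_def x_def algebra_simps)
    also have "\<dots> \<le> ennreal (exp (lam*p*x) * x powr \<beta> * \<delta>)"
      using x by (rule nn_integral_kernel_product_powr_le)
    finally show "(\<integral>\<^sup>+s. ennreal (g s powr p) \<partial>lborel) \<le> ennreal (exp (lam*p*x) * x powr \<beta> * \<delta>)" .
  qed
  also have "\<Lambda> powr (1/q) * (exp (lam*p*x) * x powr \<beta> * \<delta>) powr (1/p)
      = 1/4 * (sing_kernel \<nu> x * exp (lam * x))"
    using x(1) by (rule Hoelder_constant_kernel_eq)
  also have "ennreal (1/4 * (sing_kernel \<nu> x * exp (lam * x)))
      = ennreal (1/4) * ennreal (sing_kernel \<nu> (t - c) * exp (lam * (t - c)))"
    unfolding x_def by (rule ennreal_mult) (auto simp: sing_kernel_nonneg)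
  finally show ?thesis .
qed

lemma adjoint_kernel_integral_le:
  assumes s: "0 \<le> s"
  shows "(\<integral>\<^sup>+t. ennreal (L t) * ennreal (sing_kernel \<nu> (t-s) * exp(-lam*(t-s))) \<partial>lborel) \<le> ennreal (1/4)"
proof -
  define g where "g t = sing_kernel \<nu> (t-s) * exp(-lam*(t-s)) * indicator {..s+T} t" for t
  have g_nonneg: "g t \<ge> 0" for t by (simp add: g_def sing_kernel_nonneg)
  have [measurable]: "g \<in> borel_measurable borel" unfolding g_def[abs_def] by measurable
  have "(\<integral>\<^sup>+t. ennreal (L t) * ennreal (sing_kernel \<nu> (t-s) * exp(-lam*(t-s))) \<partial>lborel) = (\<integral>\<^sup>+t.
      ennreal (L t * g t) \<partial>lborel)"
  proof (intro nn_integral_cong)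
    fix t
    show "ennreal (L t) * ennreal (sing_kernel \<nu> (t-s) * exp(-lam*(t-s))) = ennreal (L t * g t)"
    proof (cases "t \<le> s + T")
      case True then show ?thesis using L_nonneg by (simp add: g_def ennreal_mult sing_kernel_nonneg)
    next
      case False
      then have "L t = 0" using s by (intro L_outside) auto
      then show ?thesis by simp
    qed
  qed
  also have "\<dots> \<le> ennreal (\<Lambda> powr (1/q) * \<delta> powr (1/p))"
  proof (rule nn_integral_L_mult_le)
    show "g \<in> borel_measurable borel" by measurable
    show "\<And>t. 0 \<le> g t" "0 \<le> \<delta>"
      using g_nonneg delta_pos by auto
    have "(\<integral>\<^sup>+t. ennreal (g t powr p) \<partial>lborel) = (\<integral>\<^sup>+v. ennreal (g (s + 1 * v) powr p) \<partial>lborel)"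
      using nn_integral_real_affine[of "\<lambda>t. ennreal (g t powr p)" 1 s] by simp
    also have "\<dots> = (\<integral>\<^sup>+v. ennreal ((sing_kernel \<nu> v * exp(-(lam * v))) powr p) * indicator {..T} v \<partial>lborel)"
      by (intro nn_integral_cong) (auto simp: g_def indicator_def)
    also have "\<dots> \<le> ennreal \<delta>" by (rule nn_integral_weighted_kernel_powr_le)
    finally show "(\<integral>\<^sup>+t. ennreal (g t powr p) \<partial>lborel) \<le> ennreal \<delta>" .
  qed
  also have "\<Lambda> powr (1/q) * \<delta> powr (1/p) = 1/4" by (rule Hoelder_constant_eq)
  finally show ?thesis .
qed

lemma volterra_iterate_le:
  assumes c: "c \<ge> 0" and t: "t \<le> T" and [measurable]: "f \<in> borel_measurable borel"
  shows "volterra \<nu> L 0 (\<lambda>s. volterra \<nu> L lam f (s - c)) t \<le> ennreal (1/4) * volterra \<nu> L lam f (t - c)"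
proof -
  define F where "F s r = ennreal (L s) * ennreal (sing_kernel \<nu> (t - s) * exp (0 * (t - s))) *
     (ennreal (L r) * ennreal (sing_kernel \<nu> (s - c - r) * exp (lam * (s - c - r))) * f r)" for s r
  have [measurable]: "case_prod F \<in> borel_measurable (lborel \<Otimes>\<^sub>M lborel)"
    unfolding F_def by measurable
  have "volterra \<nu> L 0 (\<lambda>s. volterra \<nu> L lam f (s - c)) t = (\<integral>\<^sup>+s. \<integral>\<^sup>+r. F s r \<partial>lborel \<partial>lborel)"
    unfolding volterra_def F_def
    by (intro nn_integral_cong nn_integral_cmult[symmetric]) measurable
  also have "\<dots> = (\<integral>\<^sup>+r. \<integral>\<^sup>+s. F s r \<partial>lborel \<partial>lborel)"
    by (rule lborel_pair.Fubini'[symmetric]) measurable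
  also have "\<dots> = (\<integral>\<^sup>+r. (ennreal (L r) * f r) * (\<integral>\<^sup>+s. ennreal (L s) *
      ennreal (sing_kernel \<nu> (t - s) * exp (0 * (t - s))) * ennreal (sing_kernel \<nu> (s - c - r)
      * exp (lam * (s - c - r))) \<partial>lborel) \<partial>lborel)"
    unfolding F_def
    by (intro nn_integral_cong, subst nn_integral_cmult[symmetric]) (measurable, intro
        nn_integral_cong, simp add: mult_ac)
  also have "\<dots> \<le> (\<integral>\<^sup>+r. (ennreal (L r) * f r) * (ennreal (1/4) * ennreal (sing_kernel \<nu> (t - c - r)
      * exp (lam * (t - c - r)))) \<partial>lborel)"
  proof (intro nn_integral_mono)
    fix r
    show "(ennreal (L r) * f r) * (\<integral>\<^sup>+s. ennreal (L s) * ennreal (sing_kernel \<nu> (t - s) * exp (0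
        * (t - s))) * ennreal (sing_kernel \<nu> (s - c - r) * exp (lam * (s - c - r))) \<partial>lborel)
      \<le> (ennreal (L r) * f r) * (ennreal (1/4) * ennreal (sing_kernel \<nu> (t - c - r) * exp (lam * (t - c - r))))"
    proof (cases "r < 0")
      case True
      then show ?thesis using L_outside[of r] by simp
    next
      case False
      then have "(\<integral>\<^sup>+s. ennreal (L s) * ennreal (sing_kernel \<nu> (t - s))
          * ennreal (sing_kernel \<nu> (s - c - r) * exp (lam * (s - c - r))) \<partial>lborel)
        \<le> ennreal (1/4) * ennreal (sing_kernel \<nu> (t - c - r) * exp (lam * (t - c - r)))"
        using kernel_convolution_le[of "c + r" t] c t by (simp add: diff_diff_eq)
      then show ?thesis by (intro mult_left_mono) simp_all
    qed
  qed
  also have "\<dots> = ennreal (1/4) * volterra \<nu> L lam f (t - c)"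
    unfolding volterra_def
    by (subst nn_integral_cmult[symmetric]) (measurable, intro nn_integral_cong, simp add: mult_ac)
  finally show ?thesis .
qed

lemma nn_integral_L_volterra_le:
  assumes [measurable]: "e \<in> borel_measurable borel"
  shows "(\<integral>\<^sup>+t. ennreal (L t) * volterra \<nu> L (-lam) e t \<partial>lborel)
    \<le> ennreal (1/4) * (\<integral>\<^sup>+t. ennreal (L t) * e t \<partial>lborel)"
proof -
  define G where "G t s = ennreal (L t) * (ennreal (L s) * ennreal (sing_kernel \<nu> (t - s)
      * exp (-lam * (t - s))) * e s)" for t s
  have [measurable]: "case_prod G \<in> borel_measurable (lborel \<Otimes>\<^sub>M lborel)"
    unfolding G_def by measurable
  have "(\<integral>\<^sup>+t. ennreal (L t) * volterra \<nu> L (-lam) e t \<partial>lborel) = (\<integral>\<^sup>+t. \<integral>\<^sup>+s. G t s \<partial>lborel \<partial>lborel)"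
    unfolding volterra_def G_def by (intro nn_integral_cong nn_integral_cmult[symmetric]) measurable
  also have "\<dots> = (\<integral>\<^sup>+s. \<integral>\<^sup>+t. G t s \<partial>lborel \<partial>lborel)"
    by (rule lborel_pair.Fubini'[symmetric]) measurable
  also have "\<dots> = (\<integral>\<^sup>+s. (ennreal (L s) * e s)
      * (\<integral>\<^sup>+t. ennreal (L t) * ennreal (sing_kernel \<nu> (t - s) * exp (-lam * (t - s))) \<partial>lborel) \<partial>lborel)"
    unfolding G_def
    by (intro nn_integral_cong, subst nn_integral_cmult[symmetric])
       (measurable, intro nn_integral_cong, simp add: mult_ac)
  also have "\<dots> \<le> (\<integral>\<^sup>+s. ennreal (1/4) * (ennreal (L s) * e s) \<partial>lborel)"
  proof (intro nn_integral_mono)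
    fix s
    show "(ennreal (L s) * e s)
        * (\<integral>\<^sup>+t. ennreal (L t) * ennreal (sing_kernel \<nu> (t - s) * exp (-lam * (t - s))) \<partial>lborel)
      \<le> ennreal (1/4) * (ennreal (L s) * e s)"
    proof (cases "s < 0")
      case True then show ?thesis using L_outside[of s] by simp
    next
      case False then show ?thesis
        by (subst mult.commute, intro mult_left_mono adjoint_kernel_integral_le) auto
    qed
  qed
  also have "\<dots> = ennreal (1/4) * (\<integral>\<^sup>+t. ennreal (L t) * e t \<partial>lborel)"
    by (rule nn_integral_cmult) measurable
  finally show ?thesis .
qed

lemma volterra_subsolution_eq_0:
  assumes [measurable]: "e \<in> borel_measurable borel"
    and finite: "(\<integral>\<^sup>+t. ennreal (L t) * e t \<partial>lborel) < \<infinity>"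
    and sub: "AE t in lborel. e t \<le> volterra \<nu> L (-lam) e t"
  shows "AE t in lborel. e t = 0"
proof -
  define N where "N = (\<integral>\<^sup>+t. ennreal (L t) * e t \<partial>lborel)"
  have "N \<le> (\<integral>\<^sup>+t. ennreal (L t) * volterra \<nu> L (-lam) e t \<partial>lborel)"
    unfolding N_def using sub by (intro nn_integral_mono_AE) (auto elim!: eventually_mono intro: mult_left_mono)
  also have "\<dots> \<le> ennreal (1/4) * N"
    unfolding N_def by (rule nn_integral_L_volterra_le) measurable
  finally have N_le: "N \<le> ennreal (1/4) * N" .
  have "N = 0"
  proof -
    obtain r where r: "N = ennreal r" "r \<ge> 0" using finite by (cases N) (auto simp: N_def)
    with N_le have "ennreal r \<le> ennreal (r/4)" by (simp add: ennreal_mult[symmetric])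
    then show ?thesis using r by simp
  qed
  then have "AE s in lborel. ennreal (L s) * e s = 0"
    unfolding N_def by (subst (asm) nn_integral_0_iff_AE) auto
  then have "volterra \<nu> L (-lam) e t = 0" for t
    unfolding volterra_def
    by (subst nn_integral_0_iff_AE) (auto elim!: eventually_mono simp: mult.commute mult.left_commute)
  with sub show ?thesis by simp
qed

end

locale delay_gronwall = Lq_coefficient +
  fixes h :: real and n :: nat and \<theta> \<xi> :: "real \<Rightarrow> real"
  assumes h_pos: "0 < h" and T_less: "T < (real n + 1) * h"
    and \<theta>_nonneg: "\<And>t. \<theta> t \<ge> 0" and \<xi>_nonneg: "\<And>t. \<xi> t \<ge> 0"
    and \<theta>_neg: "\<And>t. t < 0 \<Longrightarrow> \<theta> t = 0"
    and \<xi>_outside: "\<And>t. t < 0 \<or> t > T \<Longrightarrow> \<xi> t = 0"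
    and \<theta>_measurable[measurable]: "\<theta> \<in> borel_measurable borel"
    and \<xi>_measurable[measurable]: "\<xi> \<in> borel_measurable borel"
    and \<xi>_Lp: "(\<integral>\<^sup>+t. ennreal (\<xi> t powr (q/(q-1))) \<partial>lborel) < \<infinity>"
    and \<xi>_ineq: "AE t in lborel. 0 \<le> t \<and> t \<le> T \<longrightarrow> ennreal (\<xi> t) \<le> ennreal (\<theta> t)
        + volterra \<nu> L 0 (\<lambda>s. ennreal (\<xi> s)) t + volterra \<nu> L 0 (\<lambda>s. ennreal (\<xi> (s - h))) t"
begin

lemma nn_integral_L_\<xi>_finite: "(\<integral>\<^sup>+t. ennreal (L t * \<xi> t) \<partial>lborel) < \<infinity>"
proof -
  define X where "X = enn2real (\<integral>\<^sup>+t. ennreal (\<xi> t powr p) \<partial>lborel)"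
  have Xe: "(\<integral>\<^sup>+t. ennreal (\<xi> t powr p) \<partial>lborel) \<le> ennreal X"
    using \<xi>_Lp unfolding X_def p_def by (simp add: ennreal_enn2real_if)
  have "(\<integral>\<^sup>+t. ennreal (L t * \<xi> t) \<partial>lborel) \<le> ennreal (\<Lambda> powr (1/q) * X powr (1/p))"
    by (rule nn_integral_L_mult_le[OF \<xi>_measurable \<xi>_nonneg Xe]) (simp add: X_def)
  also have "\<dots> < \<infinity>" by simp
  finally show ?thesis .
qed

(* The weight e^(-lam t) turns B_0 into B_(-lam) (volterra_mult_exp), and the cut-off at tau keeps
   the subsolution property valid for all t. *)
lemma subsolution_eq_0:
  assumes [measurable]: "d \<in> borel_measurable borel"
    and d_neg: "\<And>t. t < 0 \<Longrightarrow> d t = 0" and d_le: "\<And>t. d t \<le> ennreal (\<xi> t)"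
    and sub: "AE t in lborel. t < \<tau> \<longrightarrow> d t \<le> volterra \<nu> L 0 d t"
  shows "AE t in lborel. t < \<tau> \<longrightarrow> d t = 0"
proof -
  define e where "e t = d t * ennreal (exp (-lam * t)) * indicator {..<\<tau>} t" for t
  have [measurable]: "e \<in> borel_measurable borel" unfolding e_def[abs_def] by measurable
  have "AE t in lborel. e t \<le> volterra \<nu> L (-lam) e t"
    using sub
  proof eventually_elim
    case (elim t)
    show ?case
    proof (cases "t < \<tau>")
      case True
      then have "e t \<le> volterra \<nu> L 0 d t * ennreal (exp (-lam * t))"
        using elim by (simp add: e_def mult_right_mono)
      also have "\<dots> = volterra \<nu> L (-lam) (\<lambda>s. d s * ennreal (exp (-lam * s))) t"
        by (rule volterra_mult_exp) measurable
      also have "\<dots> = volterra \<nu> L (-lam) e t"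
        using True by (intro volterra_cong_before) (simp add: e_def)
      finally show ?thesis .
    qed (simp add: e_def)
  qed
  moreover have "(\<integral>\<^sup>+t. ennreal (L t) * e t \<partial>lborel) < \<infinity>"
  proof -
    have "e t \<le> ennreal (\<xi> t)" for t
    proof (cases "t < 0")
      case False
      then have "ennreal (exp (-lam * t)) * indicator {..<\<tau>} t \<le> 1"
        using lam_pos by (auto simp: indicator_def ennreal_le_1)
      then have "e t \<le> d t" unfolding e_def mult.assoc by (metis mult.right_neutral mult_left_mono zero_le)
      then show ?thesis using d_le order_trans by blast
    qed (simp add: e_def d_neg)
    then have "(\<integral>\<^sup>+t. ennreal (L t) * e t \<partial>lborel) \<le> (\<integral>\<^sup>+t. ennreal (L t * \<xi> t) \<partial>lborel)"
      using L_nonneg \<xi>_nonneg by (intro nn_integral_mono) (simp add: ennreal_mult mult_left_mono)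
    then show ?thesis using nn_integral_L_\<xi>_finite by (simp add: order.strict_trans1)
  qed
  ultimately have "AE t in lborel. e t = 0" by (intro volterra_subsolution_eq_0) measurable
  then show ?thesis by eventually_elim (auto simp: e_def indicator_def)
qed

lemma delayed_subsolution_eq_0:
  assumes [measurable]: "d \<in> borel_measurable borel"
    and d_outside: "\<And>t. t < 0 \<or> t > T \<Longrightarrow> d t = 0" and d_le: "\<And>t. d t \<le> ennreal (\<xi> t)"
    and sub: "AE t in lborel. 0 \<le> t \<and> t \<le> T \<longrightarrow> d t \<le> volterra \<nu> L 0 d t + volterra \<nu> L 0 (\<lambda>s. d (s - h)) t"
  shows "AE t in lborel. 0 \<le> t \<and> t \<le> T \<longrightarrow> d t = 0"
proof -
  have d_neg: "\<And>t. t < 0 \<Longrightarrow> d t = 0" using d_outside by simp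
  have "AE t in lborel. t < real j * h \<longrightarrow> d t = 0" for j :: nat
  proof (induction j)
    case 0
    show ?case using d_neg by (intro AE_I2) auto
  next
    case (Suc j)
    have "AE t in lborel. t < real (Suc j) * h \<longrightarrow> d t \<le> volterra \<nu> L 0 d t"
      using sub
    proof eventually_elim
      case (elim t)
      show ?case
      proof
        assume "t < real (Suc j) * h"
        then have "volterra \<nu> L 0 (\<lambda>s. d (s - h)) t = 0"
          using Suc.IH by (intro volterra_delay_eq_0) (auto simp: algebra_simps)
        then show "d t \<le> volterra \<nu> L 0 d t"
          using elim d_outside[of t] by (cases "0 \<le> t \<and> t \<le> T") auto
      qed
    qed
    from subsolution_eq_0[OF assms(1) d_neg d_le this] show ?case .
  qed
  from this[of "Suc n"] show ?thesis
    by eventually_elim (use T_less in \<open>auto simp: algebra_simps\<close>)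
qed

definition "shift_term j t = volterra \<nu> L lam (\<lambda>s. ennreal (\<theta> s)) (t - real j * h)"
definition "shift_delay_term j t = volterra \<nu> L lam (\<lambda>s. ennreal (\<theta> (s - h))) (t - real j * h)"
definition "shift_sum t = (\<Sum>j\<in>{0..n}. shift_term j t + shift_delay_term j t)"
definition "supersolution t = ennreal (\<theta> t) + 2 * shift_sum t"

lemma shift_term_measurable[measurable]: "shift_term j \<in> borel_measurable borel"
  unfolding shift_term_def[abs_def] by measurable
lemma shift_delay_term_measurable[measurable]: "shift_delay_term j \<in> borel_measurable borel"
  unfolding shift_delay_term_def[abs_def] by measurable
lemma shift_sum_measurable[measurable]: "shift_sum \<in> borel_measurable borel"
  unfolding shift_sum_def[abs_def] by measurable

lemma supersolution_measurable[measurable]: "supersolution \<in> borel_measurable borel"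
  unfolding supersolution_def[abs_def] by measurable

lemma shift_term_Suc_n: "t \<le> T \<Longrightarrow> shift_term (Suc n) t = 0"
  unfolding shift_term_def
proof (rule volterra_eq_0)
  fix s assume "t \<le> T" "s < t - real (Suc n) * h"
  then have "s < 0" using T_less by (simp add: algebra_simps)
  then show "ennreal (L s) * ennreal (\<theta> s) = 0" using L_outside[of s] by simp
qed

lemma shift_delay_term_ge_n: "t \<le> T \<Longrightarrow> j \<ge> n \<Longrightarrow> shift_delay_term j t = 0"
  unfolding shift_delay_term_def
proof (rule volterra_eq_0)
  fix s assume a: "t \<le> T" "j \<ge> n" "s < t - real j * h"
  have "real n * h \<le> real j * h" using a h_pos by (intro mult_right_mono) auto
  then have "s - h < 0" using a T_less by (simp add: algebra_simps)
  then show "ennreal (L s) * ennreal (\<theta> (s - h)) = 0" using \<theta>_neg[of "s - h"] by simp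
qed

lemma shift_sum_Suc_le:
  assumes "t \<le> T"
  shows "(\<Sum>j\<in>{0..n}. shift_term (Suc j) t + shift_delay_term (Suc j) t) \<le> shift_sum t"
proof -
  let ?F = "\<lambda>j. shift_term j t + shift_delay_term j t"
  have "(\<Sum>j\<in>{0..n}. shift_term (Suc j) t + shift_delay_term (Suc j) t) \<le> ?F 0 + (\<Sum>j\<in>{0..n}. (?F \<circ> Suc) j)"
    by simp
  also have "\<dots> = (\<Sum>j\<in>{0..Suc n}. ?F j)" by (rule sum.atLeast0_atMost_Suc_shift[symmetric])
  also have "\<dots> = (\<Sum>j\<in>{0..n}. ?F j) + ?F (Suc n)" by (rule sum.atLeast0_atMost_Suc)
  also have "?F (Suc n) = 0" using assms shift_term_Suc_n shift_delay_term_ge_n by simp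
  finally show ?thesis by (simp add: shift_sum_def)
qed

lemma volterra_shift_term_le:
  assumes "t \<le> T"
  shows "volterra \<nu> L 0 (\<lambda>s. shift_term j (s - real m * h)) t \<le> ennreal (1/4) * shift_term (j + m) t"
    and "volterra \<nu> L 0 (\<lambda>s. shift_delay_term j (s - real m * h)) t \<le> ennreal (1/4) * shift_delay_term (j + m) t"
proof -
  have shift: "s - real m * h - real j * h = s - real (j + m) * h" for s
    by (simp add: algebra_simps)
  show "volterra \<nu> L 0 (\<lambda>s. shift_term j (s - real m * h)) t \<le> ennreal (1/4) * shift_term (j + m) t"
    unfolding shift_term_def shift using assms h_pos by (intro volterra_iterate_le) auto
  show "volterra \<nu> L 0 (\<lambda>s. shift_delay_term j (s - real m * h)) t \<le> ennreal (1/4) * shift_delay_term (j + m) t"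
    unfolding shift_delay_term_def shift using assms h_pos by (intro volterra_iterate_le) auto
qed

lemma volterra_shift_sum_le:
  assumes "t \<le> T"
  shows "volterra \<nu> L 0 (\<lambda>s. shift_sum (s - real m * h)) t
    \<le> ennreal (1/4) * (\<Sum>j\<in>{0..n}. shift_term (j + m) t + shift_delay_term (j + m) t)"
proof -
  have "volterra \<nu> L 0 (\<lambda>s. shift_sum (s - real m * h)) t
      = (\<Sum>j\<in>{0..n}. volterra \<nu> L 0 (\<lambda>s. shift_term j (s - real m * h) + shift_delay_term j (s - real m * h)) t)"
    unfolding shift_sum_def by (rule volterra_sum) measurable
  also have "\<dots> = (\<Sum>j\<in>{0..n}. volterra \<nu> L 0 (\<lambda>s. shift_term j (s - real m * h)) t
      + volterra \<nu> L 0 (\<lambda>s. shift_delay_term j (s - real m * h)) t)"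
    by (intro sum.cong refl volterra_add) measurable
  also have "\<dots> \<le> (\<Sum>j\<in>{0..n}. ennreal (1/4) * shift_term (j + m) t + ennreal (1/4) * shift_delay_term (j + m) t)"
    using volterra_shift_term_le[OF assms] by (intro sum_mono add_mono)
  finally show ?thesis by (simp add: sum_distrib_left distrib_left)
qed

lemma volterra_supersolution_le:
  assumes t: "0 \<le> t" "t \<le> T"
  shows "ennreal (\<theta> t) + volterra \<nu> L 0 supersolution t + volterra \<nu> L 0 (\<lambda>s. supersolution (s - h)) t
    \<le> supersolution t"
proof -
  have split: "volterra \<nu> L 0 (\<lambda>s. supersolution (s - real m * h)) t
      = volterra \<nu> L 0 (\<lambda>s. ennreal (\<theta> (s - real m * h))) t + 2
          * volterra \<nu> L 0 (\<lambda>s. shift_sum (s - real m * h)) t" for m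
    unfolding supersolution_def by (rule volterra_add_cmult) measurable
  have G: "volterra \<nu> L 0 supersolution t \<le> shift_term 0 t + 2 * (ennreal (1/4) * shift_sum t)"
  proof -
    have "volterra \<nu> L 0 (\<lambda>s. ennreal (\<theta> s)) t \<le> shift_term 0 t"
      unfolding shift_term_def using lam_pos by (simp add: volterra_mono_rate)
    with split[of 0] volterra_shift_sum_le[OF t(2), of 0] show ?thesis
      by (simp add: shift_sum_def[symmetric] add_mono mult_left_mono)
  qed
  have G_delay: "volterra \<nu> L 0 (\<lambda>s. supersolution (s - h)) t \<le> shift_delay_term 0 t + 2
      * (ennreal (1/4) * shift_sum t)"
  proof -
    have "volterra \<nu> L 0 (\<lambda>s. ennreal (\<theta> (s - h))) t \<le> shift_delay_term 0 t"
      unfolding shift_delay_term_def using lam_pos by (simp add: volterra_mono_rate)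
    moreover have "volterra \<nu> L 0 (\<lambda>s. shift_sum (s - h)) t \<le> ennreal (1/4) * shift_sum t"
      using volterra_shift_sum_le[OF t(2), of 1] shift_sum_Suc_le[OF t(2)]
      by (simp add: order_trans mult_left_mono)
    ultimately show ?thesis using split[of 1] by (simp add: add_mono mult_left_mono)
  qed
  have first_terms: "shift_term 0 t + shift_delay_term 0 t \<le> shift_sum t"
    unfolding shift_sum_def by (rule member_le_sum[where i=0, of _ "\<lambda>j. shift_term j t
        + shift_delay_term j t"]) auto
  have quarters: "2 * (ennreal (1/4) * shift_sum t) + 2 * (ennreal (1/4) * shift_sum t) = shift_sum t"
  proof -
    have "2 * (ennreal (1/4) * shift_sum t) + 2 * (ennreal (1/4) * shift_sum t)
        = (ennreal 2 * ennreal (1/4) + ennreal 2 * ennreal (1/4)) * shift_sum t"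
      by (simp add: distrib_right mult.assoc)
    also have "ennreal 2 * ennreal (1/4) = ennreal (1/2)"
      by (subst ennreal_mult[symmetric]) auto
    also have "ennreal (1/2) + ennreal (1/2) = 1"
      by (subst ennreal_plus[symmetric]) auto
    finally show ?thesis by simp
  qed
  have "ennreal (\<theta> t) + volterra \<nu> L 0 supersolution t + volterra \<nu> L 0 (\<lambda>s. supersolution (s - h)) t
      \<le> ennreal (\<theta> t) + (shift_term 0 t + 2 * (ennreal (1/4) * shift_sum t))
        + (shift_delay_term 0 t + 2 * (ennreal (1/4) * shift_sum t))"
    by (intro add_mono G G_delay order_refl)
  also have "\<dots> = ennreal (\<theta> t) + (shift_term 0 t + shift_delay_term 0 t)
      + (2 * (ennreal (1/4) * shift_sum t) + 2 * (ennreal (1/4) * shift_sum t))"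
    by (simp add: add_ac)
  also have "\<dots> = ennreal (\<theta> t) + (shift_term 0 t + shift_delay_term 0 t) + shift_sum t"
    by (simp only: quarters)
  also have "\<dots> \<le> ennreal (\<theta> t) + shift_sum t + shift_sum t"
    by (intro add_mono first_terms order_refl)
  also have "\<dots> = supersolution t"
    by (simp add: supersolution_def mult_2 add.assoc)
  finally show ?thesis .
qed

lemma \<xi>_le_supersolution: "AE t in lborel. 0 \<le> t \<and> t \<le> T \<longrightarrow> ennreal (\<xi> t) \<le> supersolution t"
proof -
  define d where "d t = ennreal (\<xi> t) - supersolution t" for t
  have [measurable]: "d \<in> borel_measurable borel" unfolding d_def[abs_def] by measurable
  have \<xi>_le: "ennreal (\<xi> s) \<le> supersolution s + d s" for s
    unfolding d_def using ennreal_minus_le_iff[of "ennreal (\<xi> s)" "supersolution s" "ennreal (\<xi> s) -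
        supersolution s"] by simp
  have sub: "AE t in lborel. 0 \<le> t \<and> t \<le> T \<longrightarrow> d t \<le> volterra \<nu> L 0 d t + volterra \<nu> L 0 (\<lambda>s. d (s - h)) t"
    using \<xi>_ineq
  proof eventually_elim
    case (elim t)
    show ?case
    proof
      assume t: "0 \<le> t \<and> t \<le> T"
      have "volterra \<nu> L 0 (\<lambda>s. ennreal (\<xi> s)) t \<le> volterra \<nu> L 0 supersolution t + volterra \<nu> L 0 d t"
        by (rule volterra_le_add[OF \<xi>_le]) measurable
      moreover have "volterra \<nu> L 0 (\<lambda>s. ennreal (\<xi> (s - h))) t
          \<le> volterra \<nu> L 0 (\<lambda>s. supersolution (s - h)) t + volterra \<nu> L 0 (\<lambda>s. d (s - h)) t"
        by (rule volterra_le_add[OF \<xi>_le]) measurable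
      ultimately have "ennreal (\<xi> t) \<le> ennreal (\<theta> t) + (volterra \<nu> L 0 supersolution t + volterra \<nu> L 0 d t)
          + (volterra \<nu> L 0 (\<lambda>s. supersolution (s - h)) t + volterra \<nu> L 0 (\<lambda>s. d (s - h)) t)"
        using elim t by (meson add_mono order_refl order_trans)
      also have "\<dots> = (ennreal (\<theta> t) + volterra \<nu> L 0 supersolution t
          + volterra \<nu> L 0 (\<lambda>s. supersolution (s - h)) t)
          + (volterra \<nu> L 0 d t + volterra \<nu> L 0 (\<lambda>s. d (s - h)) t)"
        by (simp add: add_ac)
      also have "\<dots> \<le> supersolution t + (volterra \<nu> L 0 d t + volterra \<nu> L 0 (\<lambda>s. d (s - h)) t)"
        using volterra_supersolution_le t by (intro add_mono order_refl) auto
      finally show "d t \<le> volterra \<nu> L 0 d t + volterra \<nu> L 0 (\<lambda>s. d (s - h)) t"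
        unfolding d_def by (subst ennreal_minus_le_iff) auto
    qed
  qed
  have "d t = 0" if "t < 0 \<or> t > T" for t using \<xi>_outside[OF that] by (simp add: d_def)
  moreover have "d t \<le> ennreal (\<xi> t)" for t by (simp add: d_def)
  ultimately have "AE t in lborel. 0 \<le> t \<and> t \<le> T \<longrightarrow> d t = 0"
    using sub by (intro delayed_subsolution_eq_0) measurable
  then show ?thesis
    by eventually_elim (auto simp: d_def dest: ennreal_minus_eq_0)
qed

lemma supersolution_le_theta_n:
  assumes t: "0 \<le> t" "t \<le> T"
  shows "supersolution t \<le> theta_n \<nu> h n (2 * exp (lam * T)) L \<theta> t
           + ennreal (2 * exp (lam * T)) * sing_int \<nu> 0 t t (\<lambda>s. L s * \<theta> s)"
proof -
  define E where "E = ennreal (exp (lam * T))"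
  define A where "A k = sing_int \<nu> 0 (t - real k * h) (t - real k * h) (\<lambda>s. L s * \<theta> s)" for k
  define B where "B k = sing_int \<nu> h (t - real k * h) (t - real k * h) (\<lambda>s. L s * \<theta> (s - h))" for k
  have tk: "t - real k * h \<le> T" for k
    using t h_pos by (smt (verit) mult_nonneg_nonneg of_nat_0_le_iff)
  have "shift_term k t \<le> E * A k" for k
  proof -
    have "shift_term k t \<le> E * volterra \<nu> L 0 (\<lambda>s. ennreal (\<theta> s)) (t - real k * h)"
      unfolding shift_term_def E_def using lam_pos tk L_outside by (intro volterra_le_exp_mult) auto
    also have "\<dots> \<le> E * A k"
      unfolding A_def using L_nonneg \<theta>_nonneg L_outside
      by (intro mult_left_mono volterra_le_sing_int) auto
    finally show ?thesis .
  qed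
  moreover have "shift_delay_term k t \<le> E * B k" for k
  proof -
    have "shift_delay_term k t \<le> E * volterra \<nu> L 0 (\<lambda>s. ennreal (\<theta> (s - h))) (t - real k * h)"
      unfolding shift_delay_term_def E_def using lam_pos tk L_outside by (intro volterra_le_exp_mult) auto
    also have "\<dots> \<le> E * B k"
      unfolding B_def using L_nonneg \<theta>_nonneg \<theta>_neg
      by (intro mult_left_mono volterra_le_sing_int) auto
    finally show ?thesis .
  qed
  ultimately have "shift_sum t \<le> (\<Sum>k\<in>{0..n}. E * A k + E * B k)"
    unfolding shift_sum_def by (intro sum_mono add_mono)
  also have "\<dots> = E * ((\<Sum>k\<in>{0..n}. A k) + (\<Sum>k\<in>{0..n}. B k))"
    by (simp add: sum.distrib sum_distrib_left distrib_left)
  also have "(\<Sum>k\<in>{0..n}. A k) = A 0 + (\<Sum>k\<in>{1..n}. A k)"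
    by (subst sum.atLeast_Suc_atMost) auto
  also have "(\<Sum>k\<in>{0..n}. B k) = (\<Sum>k\<in>{0..<n}. B k) + B n"
    by (simp add: atLeastLessThanSuc_atLeastAtMost[symmetric])
  also have "B n = 0"
  proof -
    have "t - real n * h < h" using t T_less by (simp add: algebra_simps)
    then show ?thesis by (simp add: B_def sing_int_def)
  qed
  finally have "supersolution t \<le> ennreal (\<theta> t) + 2 * (E * (A 0 + (\<Sum>k\<in>{1..n}. A k) + (\<Sum>k\<in>{0..<n}. B k)))"
    unfolding supersolution_def by (intro add_mono mult_left_mono) (auto simp: add_ac)
  also have "\<dots> = theta_n \<nu> h n (2 * exp (lam * T)) L \<theta> t
           + ennreal (2 * exp (lam * T)) * sing_int \<nu> 0 t t (\<lambda>s. L s * \<theta> s)"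
    by (simp add: theta_n_def A_def B_def E_def ennreal_mult distrib_left mult.assoc add_ac)
  finally show ?thesis .
qed

lemma \<xi>_le_theta_n:
  "\<exists>K>0. AE t in lborel. 0 \<le> t \<and> t \<le> T \<longrightarrow>
     ennreal (\<xi> t) \<le> theta_n \<nu> h n K L \<theta> t + ennreal K * sing_int \<nu> 0 t t (\<lambda>s. L s * \<theta> s)"
proof (intro exI conjI)
  show "2 * exp (lam * T) > 0" by simp
  show "AE t in lborel. 0 \<le> t \<and> t \<le> T \<longrightarrow> ennreal (\<xi> t)
      \<le> theta_n \<nu> h n (2 * exp (lam * T)) L \<theta> t + ennreal (2 * exp (lam * T)) * sing_int \<nu> 0 t t (\<lambda>s. L s * \<theta> s)"
    using \<xi>_le_supersolution by eventually_elim (use supersolution_le_theta_n in \<open>blast intro: order_trans\<close>)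
qed

end

(* The hypotheses control L, theta and xi only on (0,T) and [-h,T). Truncating them there gives global
   measurability and integrability, and changes neither side of the inequality for 0 <= t < T. *)
lemma delay_gronwall_truncation:
  fixes \<nu> h T q :: real and n :: nat and L \<theta> \<xi> :: "real \<Rightarrow> real"
  assumes "0 < \<nu>" "\<nu> < 1" "0 < h" "0 < T" "q > 1 / \<nu>" "T < (real n + 1) * h"
    and L_nonneg: "\<And>t. L t \<ge> 0" and \<theta>_nonneg: "\<And>t. \<theta> t \<ge> 0" and \<xi>_nonneg: "\<And>t. \<xi> t \<ge> 0"
    and "\<And>t. t < 0 \<Longrightarrow> \<theta> t = 0" "\<And>t. t < 0 \<Longrightarrow> \<xi> t = 0"
    and "set_borel_measurable lborel {0<..<T} L"
    and L_Lq: "(\<integral>\<^sup>+ t\<in>{0<..<T}. ennreal (L t powr q) \<partial>lborel) < \<infinity>"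
    and "set_borel_measurable lborel {-h..<T} \<theta>"
    and "set_borel_measurable lborel {-h..<T} \<xi>"
    and \<xi>_Lp: "(\<integral>\<^sup>+ t\<in>{-h..<T}. ennreal (\<xi> t powr (q / (q - 1))) \<partial>lborel) < \<infinity>"
    and ineq: "AE t in lborel. t \<in> {0..T} \<longrightarrow>
           ennreal (\<xi> t) \<le> ennreal (\<theta> t)
             + sing_int \<nu> 0 t t (\<lambda>s. L s * \<xi> s)
             + sing_int \<nu> 0 t t (\<lambda>s. L s * \<xi> (s - h))"
  shows "delay_gronwall \<nu> q T (\<lambda>t. indicator {0<..<T} t * L t) h n
           (\<lambda>t. indicator {-h..<T} t * \<theta> t) (\<lambda>t. indicator {-h..<T} t * \<xi> t)"
proof unfold_locales
  have "(\<integral>\<^sup>+t. ennreal ((indicator {0<..<T} t * L t) powr q) \<partial>lborel)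
      = (\<integral>\<^sup>+ t\<in>{0<..<T}. ennreal (L t powr q) \<partial>lborel)"
    by (intro nn_integral_cong) (auto simp: indicator_def)
  with L_Lq show "(\<integral>\<^sup>+t. ennreal ((indicator {0<..<T} t * L t) powr q) \<partial>lborel) < \<infinity>"
    by simp
  have "(\<integral>\<^sup>+t. ennreal ((indicator {-h..<T} t * \<xi> t) powr (q / (q - 1))) \<partial>lborel)
      = (\<integral>\<^sup>+ t\<in>{-h..<T}. ennreal (\<xi> t powr (q / (q - 1))) \<partial>lborel)"
    by (intro nn_integral_cong) (auto simp: indicator_def)
  with \<xi>_Lp show "(\<integral>\<^sup>+t. ennreal ((indicator {-h..<T} t * \<xi> t) powr (q / (q - 1))) \<partial>lborel) < \<infinity>"
    by simp
  show "AE t in lborel. 0 \<le> t \<and> t \<le> T \<longrightarrow> ennreal (indicator {-h..<T} t * \<xi> t)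
      \<le> ennreal (indicator {-h..<T} t * \<theta> t)
        + volterra \<nu> (\<lambda>t. indicator {0<..<T} t * L t) 0 (\<lambda>s. ennreal (indicator {-h..<T} s * \<xi> s)) t
        + volterra \<nu> (\<lambda>t. indicator {0<..<T} t * L t) 0 (\<lambda>s. ennreal (indicator {-h..<T} (s - h) * \<xi> (s - h))) t"
    using ineq AE_lborel_singleton[of T]
  proof eventually_elim
    case (elim t)
    show ?case
    proof
      assume t: "0 \<le> t \<and> t \<le> T"
      with elim have "t < T" by auto
      with t elim \<open>0 < h\<close> show "ennreal (indicator {-h..<T} t * \<xi> t)
        \<le> ennreal (indicator {-h..<T} t * \<theta> t)
          + volterra \<nu> (\<lambda>t. indicator {0<..<T} t * L t) 0 (\<lambda>s. ennreal (indicator {-h..<T} s * \<xi> s)) t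
          + volterra \<nu> (\<lambda>t. indicator {0<..<T} t * L t) 0 (\<lambda>s. ennreal (indicator {-h..<T} (s - h) * \<xi> (s - h))) t"
        by (subst (asm) (1 2) sing_int_eq_volterra[where L' = "\<lambda>t. indicator {0<..<T} t * L t"])
           (auto simp: L_nonneg \<xi>_nonneg)
    qed
  qed
qed (use assms in \<open>auto simp: set_borel_measurable_def indicator_def nn_integral_set_ennreal\<close>)

lemma sing_int_mono:
  assumes "\<And>s. f s \<le> g s"
  shows "sing_int \<nu> a b c f \<le> sing_int \<nu> a b c g"
  unfolding sing_int_def using assms
  by (intro nn_integral_mono mult_right_mono ennreal_leI divide_right_mono) auto

lemma theta_n_mono:
  assumes "\<And>s. 0 \<le> L' s" "\<And>s. L' s \<le> L s" "\<And>s. 0 \<le> \<theta>' s" "\<And>s. \<theta>' s \<le> \<theta> s"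
  shows "theta_n \<nu> h n K L' \<theta>' t \<le> theta_n \<nu> h n K L \<theta> t"
  unfolding theta_n_def using assms
  by (intro add_mono ennreal_leI mult_left_mono sum_mono sing_int_mono mult_mono) (auto intro: order_trans)

theorem theorem3p1:
  fixes \<nu> h T q :: real and n :: nat and L \<theta> \<xi> :: "real \<Rightarrow> real"
  assumes "0 < \<nu>" "\<nu> < 1" "0 < h" "0 < T" "q > 1 / \<nu>"
    and "real n * h \<le> T" "T < (real n + 1) * h"
    and "\<And>t. L t \<ge> 0" "\<And>t. \<theta> t \<ge> 0" "\<And>t. \<xi> t \<ge> 0"
    and "\<And>t. t < 0 \<Longrightarrow> \<theta> t = 0" "\<And>t. t < 0 \<Longrightarrow> L t = 0"
    and "set_borel_measurable lborel {0<..<T} L"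
    and "(\<integral>\<^sup>+ t\<in>{0<..<T}. ennreal (L t powr q) \<partial>lborel) < \<infinity>"
    and "set_borel_measurable lborel {-h..<T} \<theta>"
    and "(\<integral>\<^sup>+ t\<in>{-h..<T}. ennreal (\<theta> t powr (q / (q - 1))) \<partial>lborel) < \<infinity>"
    and "set_borel_measurable lborel {-h..<T} \<xi>"
    and "(\<integral>\<^sup>+ t\<in>{-h..<T}. ennreal (\<xi> t powr (q / (q - 1))) \<partial>lborel) < \<infinity>"
    and "AE t in lborel. t \<in> {0..T} \<longrightarrow>
           ennreal (\<xi> t) \<le> ennreal (\<theta> t)
             + sing_int \<nu> 0 t t (\<lambda>s. L s * \<xi> s)
             + sing_int \<nu> 0 t t (\<lambda>s. L s * \<xi> (s - h))"
    and "\<And>t. t < 0 \<Longrightarrow> \<xi> t = 0"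
  shows "\<exists>K>0. AE t in lborel. t \<in> {0..T} \<longrightarrow>
           ennreal (\<xi> t) \<le> theta_n \<nu> h n K L \<theta> t + ennreal K * sing_int \<nu> 0 t t (\<lambda>s. L s * \<theta> s)"
proof -
  let ?L = "\<lambda>t. indicator {0<..<T} t * L t"
  let ?\<theta> = "\<lambda>t. indicator {-h..<T} t * \<theta> t"
  let ?\<xi> = "\<lambda>t. indicator {-h..<T} t * \<xi> t"
  interpret delay_gronwall \<nu> q T ?L h n ?\<theta> ?\<xi>
    by (rule delay_gronwall_truncation) (use assms in auto)
  obtain K where "K > 0" and K: "AE t in lborel. 0 \<le> t \<and> t \<le> T \<longrightarrow>
      ennreal (?\<xi> t) \<le> theta_n \<nu> h n K ?L ?\<theta> t + ennreal K * sing_int \<nu> 0 t t (\<lambda>s. ?L s * ?\<theta> s)"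
    using \<xi>_le_theta_n by blast
  have "AE t in lborel. t \<in> {0..T} \<longrightarrow>
      ennreal (\<xi> t) \<le> theta_n \<nu> h n K L \<theta> t + ennreal K * sing_int \<nu> 0 t t (\<lambda>s. L s * \<theta> s)"
    using K AE_lborel_singleton[of T]
  proof eventually_elim
    case (elim t)
    have "theta_n \<nu> h n K ?L ?\<theta> t + ennreal K * sing_int \<nu> 0 t t (\<lambda>s. ?L s * ?\<theta> s)
        \<le> theta_n \<nu> h n K L \<theta> t + ennreal K * sing_int \<nu> 0 t t (\<lambda>s. L s * \<theta> s)"
      using assms(8,9)
      by (intro add_mono mult_left_mono theta_n_mono sing_int_mono mult_mono) (auto simp: indicator_def)
    with elim \<open>0 < h\<close> show ?case by (auto simp: indicator_def)
  qed
  with \<open>K > 0\<close> show ?thesis by blast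
qed

end
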